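(* Consider the D2EAL algorithm (without periodic reset) described in the context with horizon $T\ge1$ and $\eta_\alpha,\eta_w>0$, and fix $i\in[N]$. Assume: (Assumption 1) $\Omega_i(t)\subseteq\Omega_i(t-1)$ for all $t=1,\dots,T$; (Assumption 2) $|l(x_1,y)-l(x_2,y)|\le L_1\|x_1-x_2\|$ for all $x_1,x_2\in\mathcal A$, $y\in\mathcal Y$, for some constant $L_1\ge0$; (Assumption 3) there are nonnegative numbers $\delta_1,\dots,\delta_T$ with $\|f_{t,k}-f_{t,j}\|\le\delta_t$ for all $k,j\in[N]$, $t=1,\dots,T$. Let $\Delta_o\ge\sum_{t=1}^T\delta_t$ and $i^*\in\arg\min_{j\in[N]}L_{T,j}$. Then $$R_i^{BE}(T):=\hat L_{T,i}-L_{T,i^*}\le\frac{\eta_wT}{8}+\frac{\log d_i(0)}{\eta_w}+\frac{\eta_\alpha T}{8}+\frac{\log 2}{\eta_\alpha}+L_1\Delta_o.$$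
   Context: Setup. There are $N\ge 1$ agents indexed by $i\in[N]$ and a horizon $T\ge1$. The outcome space $\mathcal Y$ and action space $\mathcal A$ are convex subsets of $\mathbb R^n$, $\|\cdot\|$ is the Euclidean norm. The loss $l:\mathcal A\times\mathcal Y\to[0,1]$ is convex in its first argument. The target sequence $y_1,\dots,y_T\in\mathcal Y$ is arbitrary. For each agent $i$ and each $t\ge1$, an "expert" supplies an arbitrary prediction $f_{t,i}\in\mathcal A$ of $y_t$ (available at time $t-1$). Agents communicate over a time-varying undirected graph; $\Omega_i(t)$ is the set of neighbours of agent $i$ at time $t$, $\Lambda_i(t):=\Omega_i(t)\cup\{i\}$ and $d_i(t):=|\Lambda_i(t)|$. D2EAL (without periodic reset). Initialize $\hat f_{0,i}=f_{1,i}$, $\hat\alpha_i(0)=\hat\alpha'_i(0)=\hat w_{ii}(0)=1$ for all $i$. For $t=0,1,\dots,T-1$, each agent $i$ computes: $\alpha_i(t)=\hat\alpha_i(t)/(\hat\alpha_i(t)+\hat\alpha'_i(t))$; individual prediction $\bar f_{t+1,i}=\alpha_i(t)f_{t+1,i}+(1-\alpha_i(t))\hat f_{t,i}$; social weights $w_{ij}(t)=\hat w_{jj}(t)/\sum_{j'\in\Lambda_i(t)}\hat w_{j'j'}(t)$ for $j\in\Lambda_i(t)$ and $w_{ij}(t)=0$ otherwise; social prediction $\hat f_{t+1,i}=\sum_{j\in\Lambda_i(t)}w_{ij}(t)\bar f_{t+1,j}$. After $y_{t+1}$ is revealed, define the losses $l_{t+1,i}=l(f_{t+1,i},y_{t+1})$,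 $\hat l^-_{t+1,i}=l(\hat f_{t,i},y_{t+1})$, $\bar l_{t+1,i}=l(\bar f_{t+1,i},y_{t+1})$, $\hat l_{t+1,i}=l(\hat f_{t+1,i},y_{t+1})$, and update $\hat\alpha_i(t+1)=\hat\alpha_i(t)e^{-\eta_\alpha l_{t+1,i}}$, $\hat\alpha'_i(t+1)=\hat\alpha'_i(t)e^{-\eta_\alpha \hat l^-_{t+1,i}}$, $\hat w_{ii}(t+1)=\hat w_{ii}(t)e^{-\eta_w\bar l_{t+1,i}}$. Cumulative losses: $L_{T,i}=\sum_{t=1}^T l_{t,i}$, $\hat L^-_{T,i}=\sum_{t=1}^T\hat l^-_{t,i}$, $\bar L_{T,i}=\sum_{t=1}^T\bar l_{t,i}$, $\hat L_{T,i}=\sum_{t=1}^T\hat l_{t,i}$. *)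

theory Defs
  imports "HOL-Analysis.Analysis"
begin

text \<open>Agents are 0..N-1. Omega j t is the neighbour set
of agent j at time t. f t j is the expert prediction of agent j for y t.
The state at time t (t = 0,1,...) is the tuple
(alpha_hat(t), alpha_hat'(t), w_hat(t), f_hat_t) indexed by agents.\<close>

definition Lam :: "(nat \<Rightarrow> nat \<Rightarrow> nat set) \<Rightarrow> nat \<Rightarrow> nat \<Rightarrow> nat set" where
  "Lam Om j t = insert j (Om j t)"

type_synonym 'a d2st = "(nat \<Rightarrow> real) \<times> (nat \<Rightarrow> real) \<times> (nat \<Rightarrow> real) \<times> (nat \<Rightarrow> 'a)"

definition alpha_of :: "'a d2st \<Rightarrow> nat \<Rightarrow> real" where
  "alpha_of st j = fst st j / (fst st j + fst (snd st) j)"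

text \<open>individual prediction bar f_{t+1,j} computed from the state at time t\<close>
definition fbar_of :: "(nat \<Rightarrow> nat \<Rightarrow> 'a::real_vector) \<Rightarrow> 'a d2st \<Rightarrow> nat \<Rightarrow> nat \<Rightarrow> 'a" where
  "fbar_of f st t j = alpha_of st j *\<^sub>R f (Suc t) j + (1 - alpha_of st j) *\<^sub>R snd (snd (snd st)) j"

definition wgt_of :: "(nat \<Rightarrow> nat \<Rightarrow> nat set) \<Rightarrow> 'a d2st \<Rightarrow> nat \<Rightarrow> nat \<Rightarrow> nat \<Rightarrow> real" where
  "wgt_of Om st t j k = (if k \<in> Lam Om j t
     then fst (snd (snd st)) k / (\<Sum>k'\<in>Lam Om j t. fst (snd (snd st)) k') else 0)"

text \<open>social prediction hat f_{t+1,j}\<close>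
definition fhat_of :: "(nat \<Rightarrow> nat \<Rightarrow> nat set) \<Rightarrow> (nat \<Rightarrow> nat \<Rightarrow> 'a::real_vector) \<Rightarrow> 'a d2st \<Rightarrow> nat \<Rightarrow> nat \<Rightarrow> 'a" where
  "fhat_of Om f st t j = (\<Sum>k\<in>Lam Om j t. wgt_of Om st t j k *\<^sub>R fbar_of f st t k)"

fun d2eal_state ::
  "('a::real_vector \<Rightarrow> 'y \<Rightarrow> real) \<Rightarrow> (nat \<Rightarrow> nat \<Rightarrow> 'a) \<Rightarrow> (nat \<Rightarrow> 'y) \<Rightarrow>
   (nat \<Rightarrow> nat \<Rightarrow> nat set) \<Rightarrow> real \<Rightarrow> real \<Rightarrow> nat \<Rightarrow> 'a d2st" where
  "d2eal_state l f y Om ea ew 0 = ((\<lambda>_. 1), (\<lambda>_. 1), (\<lambda>_. 1), (\<lambda>j. f 1 j))"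
| "d2eal_state l f y Om ea ew (Suc t) =
     (let st = d2eal_state l f y Om ea ew t in
      ((\<lambda>j. fst st j * exp (- ea * l (f (Suc t) j) (y (Suc t)))),
       (\<lambda>j. fst (snd st) j * exp (- ea * l (snd (snd (snd st)) j) (y (Suc t)))),
       (\<lambda>j. fst (snd (snd st)) j * exp (- ew * l (fbar_of f st t j) (y (Suc t)))),
       (\<lambda>j. fhat_of Om f st t j)))"

text \<open>hat f_{t,j}: the social prediction of agent j for y_t (hat f_{0,j} = f_{1,j})\<close>
definition fhat ::
  "('a::real_vector \<Rightarrow> 'y \<Rightarrow> real) \<Rightarrow> (nat \<Rightarrow> nat \<Rightarrow> 'a) \<Rightarrow> (nat \<Rightarrow> 'y) \<Rightarrow>
   (nat \<Rightarrow> nat \<Rightarrow> nat set) \<Rightarrow> real \<Rightarrow> real \<Rightarrow> nat \<Rightarrow> nat \<Rightarrow> 'a" where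
  "fhat l f y Om ea ew t j = snd (snd (snd (d2eal_state l f y Om ea ew t))) j"

definition cumL :: "('a \<Rightarrow> 'y \<Rightarrow> real) \<Rightarrow> (nat \<Rightarrow> nat \<Rightarrow> 'a) \<Rightarrow> (nat \<Rightarrow> 'y) \<Rightarrow> nat \<Rightarrow> nat \<Rightarrow> real" where
  "cumL l f y T j = (\<Sum>t=1..T. l (f t j) (y t))"

definition cumLhat ::
  "('a::real_vector \<Rightarrow> 'y \<Rightarrow> real) \<Rightarrow> (nat \<Rightarrow> nat \<Rightarrow> 'a) \<Rightarrow> (nat \<Rightarrow> 'y) \<Rightarrow>
   (nat \<Rightarrow> nat \<Rightarrow> nat set) \<Rightarrow> real \<Rightarrow> real \<Rightarrow> nat \<Rightarrow> nat \<Rightarrow> real" where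
  "cumLhat l f y Om ea ew T j = (\<Sum>t=1..T. l (fhat l f y Om ea ew t j) (y t))"

end

theory Submission
  imports Defs "HOL-Probability.Hoeffding"
begin

text \<open>Both layers of D2EAL are exponentially weighted average forecasters on losses in [0,1].
  By convexity of the loss, the loss of a weighted-mean prediction is at most the weighted mean
  loss, and Hoeffding's lemma bounds \<eta> times the latter by \<eta>^2/8 plus the drop of the log of the
  total weight. Telescoping over time gives the regret bound \<eta>T/8 + ln(number of experts)/\<eta>
  against any single expert. In the social layer the experts are the neighbourhood of agent i; it
  only shrinks and the weights are never renormalised, so a departing neighbour only removes mass
  from the potential and the bound holds with d_i(0) experts. The individual layer has the two
  experts f_{t,i} and the previous social prediction. Finally, the cumulative losses of any two
  experts differ by at most L_1 \<Delta>_o, since their predictions are \<delta>_t-close and the loss is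
  Lipschitz.\<close>

lemma exp_neg_le_chord:
  fixes x eta :: real
  assumes "0 \<le> x" "x \<le> 1"
  shows "exp (- eta * x) \<le> 1 - x + x * exp (- eta)"
proof -
  have "exp ((1 - x) *\<^sub>R 0 + x *\<^sub>R (- eta)) \<le> (1 - x) * exp 0 + x * exp (- eta)"
    by (rule convex_onD[OF exp_convex]) (use assms in auto)
  then show ?thesis by (simp add: mult.commute)
qed

lemma ln_bernoulli_mgf_le:
  fixes m eta :: real
  assumes "0 \<le> m" "m \<le> 1" "eta \<ge> 0"
  shows "ln (1 - m + m * exp (- eta)) \<le> - eta * m + eta\<^sup>2 / 8"
proof -
  have pos: "1 + (1 - m) * (exp eta - 1) > 0"
    using assms by (intro add_pos_nonneg mult_nonneg_nonneg) auto
  have "1 - m + m * exp (- eta) = exp (- eta) * (1 + (1 - m) * (exp eta - 1))"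
    by (simp add: exp_minus field_simps)
  then have "ln (1 - m + m * exp (- eta)) = - eta + ln (1 + (1 - m) * (exp eta - 1))"
    using pos by (simp add: ln_mult)
  then show ?thesis
    using Hoeffdings_lemma_aux[of eta "1 - m"] assms by (simp add: algebra_simps)
qed

lemma exp_weights_step:
  fixes u x :: "'b \<Rightarrow> real" and eta :: real
  assumes S: "finite S" "S \<noteq> {}" and u: "\<And>k. k \<in> S \<Longrightarrow> u k > 0"
    and x: "\<And>k. k \<in> S \<Longrightarrow> 0 \<le> x k \<and> x k \<le> 1" and eta: "eta \<ge> 0"
  shows "eta * ((\<Sum>k\<in>S. u k * x k) / (\<Sum>k\<in>S. u k))
    \<le> eta\<^sup>2 / 8 + ln (\<Sum>k\<in>S. u k) - ln (\<Sum>k\<in>S. u k * exp (- eta * x k))"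
proof -
  define U where "U = (\<Sum>k\<in>S. u k)"
  define m where "m = (\<Sum>k\<in>S. u k * x k) / U"
  have U: "U > 0" using S u by (auto simp: U_def intro: sum_pos)
  have "(\<Sum>k\<in>S. u k * x k) \<le> U"
    unfolding U_def using u x by (intro sum_mono) (simp add: mult_le_cancel_left1 less_imp_le)
  moreover have "0 \<le> (\<Sum>k\<in>S. u k * x k)"
    using u x by (intro sum_nonneg) (meson less_imp_le mult_nonneg_nonneg)
  ultimately have m: "0 \<le> m" "m \<le> 1" using U by (auto simp: m_def)
  have E: "(\<Sum>k\<in>S. u k * exp (- eta * x k)) > 0" using S u by (intro sum_pos) auto
  have "(\<Sum>k\<in>S. u k * exp (- eta * x k)) \<le> (\<Sum>k\<in>S. u k * (1 - x k + x k * exp (- eta)))"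
    using u x exp_neg_le_chord by (intro sum_mono mult_left_mono) (auto intro: less_imp_le)
  also have "\<dots> = U - (\<Sum>k\<in>S. u k * x k) + (\<Sum>k\<in>S. u k * x k) * exp (- eta)"
    by (simp add: U_def algebra_simps sum.distrib sum_subtractf sum_distrib_left)
  also have "\<dots> = U * (1 - m + m * exp (- eta))"
    using U by (simp add: m_def field_simps)
  finally have le: "(\<Sum>k\<in>S. u k * exp (- eta * x k)) \<le> U * (1 - m + m * exp (- eta))" .
  then have mgf_pos: "1 - m + m * exp (- eta) > 0"
    using E U by (metis order_less_le_trans zero_less_mult_pos)
  have "ln (\<Sum>k\<in>S. u k * exp (- eta * x k)) \<le> ln (U * (1 - m + m * exp (- eta)))"
    using le E U by (subst ln_le_cancel_iff) auto
  also have "\<dots> = ln U + ln (1 - m + m * exp (- eta))"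
    using mgf_pos U by (simp add: ln_mult)
  finally show ?thesis
    using ln_bernoulli_mgf_le[OF m eta] by (simp add: U_def[symmetric] m_def[symmetric])
qed

lemma exp_weights_closed_form:
  fixes w x :: "nat \<Rightarrow> 'b \<Rightarrow> real"
  assumes "\<And>j. w 0 j = 1" "\<And>t j. w (Suc t) j = w t j * exp (- eta * x t j)"
  shows "w t j = exp (- eta * (\<Sum>s<t. x s j))"
  by (induction t) (simp_all add: assms algebra_simps exp_add[symmetric])

lemma exp_weights_regret:
  fixes w x :: "nat \<Rightarrow> 'b \<Rightarrow> real" and p :: "nat \<Rightarrow> real" and S :: "nat \<Rightarrow> 'b set"
  assumes eta: "eta > 0"
    and fin: "finite (S 0)"
    and nested: "\<And>t. t < T \<Longrightarrow> S (Suc t) \<subseteq> S t"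
    and k: "k \<in> S T"
    and w0: "\<And>j. w 0 j = 1"
    and wSuc: "\<And>t j. w (Suc t) j = w t j * exp (- eta * x t j)"
    and x: "\<And>t j. t < T \<Longrightarrow> j \<in> S t \<Longrightarrow> 0 \<le> x t j \<and> x t j \<le> 1"
    and p: "\<And>t. t < T \<Longrightarrow> p t \<le> (\<Sum>j\<in>S t. w t j * x t j) / (\<Sum>j\<in>S t. w t j)"
  shows "(\<Sum>t<T. p t) \<le> eta * T / 8 + ln (card (S 0)) / eta + (\<Sum>t<T. x t k)"
proof -
  have w: "w t j = exp (- eta * (\<Sum>s<t. x s j))" for t j
    using exp_weights_closed_form[of w eta x, OF w0 wSuc] .
  have antimono: "S t \<subseteq> S s" if "s \<le> t" "t \<le> T" for s t
    using that
    by (induction t rule: dec_induct) (simp, meson Suc_leD Suc_le_lessD nested order_trans)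
  have finS: "finite (S t)" if "t \<le> T" for t
    using antimono[of 0 t] that fin finite_subset by blast
  have kS: "k \<in> S t" if "t \<le> T" for t
    using antimono[of t T] that k by blast
  define Phi where "Phi t = (\<Sum>j\<in>S t. w t j)" for t
  have Phi_pos: "Phi t > 0" if "t \<le> T" for t
    unfolding Phi_def using finS[OF that] kS[OF that] by (intro sum_pos2) (auto simp: w)
  have step: "eta * p t \<le> eta\<^sup>2 / 8 + (ln (Phi t) - ln (Phi (Suc t)))" if t: "t < T" for t
  proof -
    have "Phi (Suc t) \<le> (\<Sum>j\<in>S t. w (Suc t) j)"
      unfolding Phi_def using finS[of t] nested[OF t] t by (intro sum_mono2) (auto simp: w)
    then have dropped: "ln (Phi (Suc t)) \<le> ln (\<Sum>j\<in>S t. w (Suc t) j)"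
      using Phi_pos[of "Suc t"] t by (intro ln_mono) auto
    have "eta * p t \<le> eta * ((\<Sum>j\<in>S t. w t j * x t j) / (\<Sum>j\<in>S t. w t j))"
      using p[OF t] eta by (intro mult_left_mono) auto
    also have "\<dots> \<le> eta\<^sup>2 / 8 + ln (Phi t) - ln (\<Sum>j\<in>S t. w (Suc t) j)"
      unfolding Phi_def wSuc using finS[of t] kS[of t] t x eta
      by (intro exp_weights_step) (auto simp: w)
    finally show ?thesis
      using dropped by simp
  qed
  have comparator: "ln (Phi T) \<ge> - eta * (\<Sum>t<T. x t k)"
  proof -
    have "w T k \<le> Phi T"
      unfolding Phi_def using finS kS by (intro member_le_sum) (auto simp: w)
    then show ?thesis
      using Phi_pos[of T] by (subst ln_ge_iff) (auto simp: w)
  qed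
  have "eta * (\<Sum>t<T. p t) \<le> (\<Sum>t<T. eta\<^sup>2 / 8 + (ln (Phi t) - ln (Phi (Suc t))))"
    unfolding sum_distrib_left using step by (intro sum_mono) auto
  also have "\<dots> = eta\<^sup>2 * T / 8 + ln (Phi 0) - ln (Phi T)"
    by (simp add: sum.distrib sum_lessThan_telescope'[where f = "\<lambda>t. ln (Phi t)"])
  also have "Phi 0 = card (S 0)"
    by (simp add: Phi_def w)
  finally have "eta * (\<Sum>t<T. p t) \<le> eta\<^sup>2 * T / 8 + ln (card (S 0)) + eta * (\<Sum>t<T. x t k)"
    using comparator by simp
  also have "\<dots> = eta * (eta * T / 8 + ln (card (S 0)) / eta + (\<Sum>t<T. x t k))"
    using eta by (simp add: field_simps power2_eq_square)
  finally show ?thesis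
    using eta by simp
qed

lemma weighted_mean_in_convex:
  fixes z :: "'b \<Rightarrow> 'a::real_vector"
  assumes "convex C" "finite S" "S \<noteq> {}" "\<And>k. k \<in> S \<Longrightarrow> u k > 0" "\<And>k. k \<in> S \<Longrightarrow> z k \<in> C"
  shows "(\<Sum>k\<in>S. (u k / (\<Sum>j\<in>S. u j)) *\<^sub>R z k) \<in> C"
proof -
  have U: "(\<Sum>j\<in>S. u j) > 0" using assms by (intro sum_pos) auto
  show ?thesis
  proof (rule convex_sum[OF \<open>finite S\<close> \<open>convex C\<close>])
    show "(\<Sum>k\<in>S. u k / (\<Sum>j\<in>S. u j)) = 1" using U by (simp add: sum_divide_distrib[symmetric])
  qed (use assms U in \<open>auto intro: less_imp_le\<close>)
qed

lemma convex_on_weighted_mean: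
  fixes z :: "'b \<Rightarrow> 'a::real_vector"
  assumes "convex_on C g" "finite S" "S \<noteq> {}" "\<And>k. k \<in> S \<Longrightarrow> u k > 0" "\<And>k. k \<in> S \<Longrightarrow> z k \<in> C"
  shows "g (\<Sum>k\<in>S. (u k / (\<Sum>j\<in>S. u j)) *\<^sub>R z k) \<le> (\<Sum>k\<in>S. u k * g (z k)) / (\<Sum>k\<in>S. u k)"
proof -
  have U: "(\<Sum>j\<in>S. u j) > 0" using assms by (intro sum_pos) auto
  have "g (\<Sum>k\<in>S. (u k / (\<Sum>j\<in>S. u j)) *\<^sub>R z k) \<le> (\<Sum>k\<in>S. u k / (\<Sum>j\<in>S. u j) * g (z k))"
  proof (rule convex_on_sum[OF \<open>finite S\<close> \<open>S \<noteq> {}\<close> \<open>convex_on C g\<close>])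
    show "(\<Sum>k\<in>S. u k / (\<Sum>j\<in>S. u j)) = 1" using U by (simp add: sum_divide_distrib[symmetric])
  qed (use assms U in \<open>auto intro: less_imp_le\<close>)
  also have "\<dots> = (\<Sum>k\<in>S. u k * g (z k)) / (\<Sum>k\<in>S. u k)"
    by (simp add: sum_divide_distrib)
  finally show ?thesis .
qed

lemma cumL_diff_le_Lipschitz:
  fixes l :: "'a::real_normed_vector \<Rightarrow> 'y \<Rightarrow> real"
  assumes Lipschitz: "\<And>x1 x2 v. x1 \<in> A \<Longrightarrow> x2 \<in> A \<Longrightarrow> v \<in> Y \<Longrightarrow> \<bar>l x1 v - l x2 v\<bar> \<le> L * norm (x1 - x2)"
    and L: "L \<ge> 0"
    and y: "\<And>t. 1 \<le> t \<Longrightarrow> t \<le> T \<Longrightarrow> y t \<in> Y"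
    and f: "\<And>t. 1 \<le> t \<Longrightarrow> t \<le> T \<Longrightarrow> f t i \<in> A \<and> f t j \<in> A"
    and close: "\<And>t. 1 \<le> t \<Longrightarrow> t \<le> T \<Longrightarrow> norm (f t i - f t j) \<le> delta t"
  shows "cumL l f y T i - cumL l f y T j \<le> L * (\<Sum>t=1..T. delta t)"
proof -
  have "l (f t i) (y t) - l (f t j) (y t) \<le> L * delta t" if "t \<in> {1..T}" for t
  proof -
    have "l (f t i) (y t) - l (f t j) (y t) \<le> L * norm (f t i - f t j)"
      using Lipschitz[of "f t i" "f t j" "y t"] f y that by auto
    also have "\<dots> \<le> L * delta t"
      using close that L by (auto intro: mult_left_mono)
    finally show ?thesis .
  qed
  then show ?thesis
    unfolding cumL_def sum_subtractf[symmetric] sum_distrib_left by (rule sum_mono)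
qed

locale d2eal =
  fixes l :: "'a::real_vector \<Rightarrow> 'y \<Rightarrow> real" and f :: "nat \<Rightarrow> nat \<Rightarrow> 'a" and y :: "nat \<Rightarrow> 'y"
    and Om :: "nat \<Rightarrow> nat \<Rightarrow> nat set" and eta_a eta_w :: real
begin

abbreviation state :: "nat \<Rightarrow> 'a d2st" where
  "state \<equiv> d2eal_state l f y Om eta_a eta_w"

definition alpha_hat :: "nat \<Rightarrow> nat \<Rightarrow> real" where
  "alpha_hat t j = fst (state t) j"

definition alpha_hat' :: "nat \<Rightarrow> nat \<Rightarrow> real" where
  "alpha_hat' t j = fst (snd (state t)) j"

definition w_hat :: "nat \<Rightarrow> nat \<Rightarrow> real" where
  "w_hat t j = fst (snd (snd (state t))) j"

text \<open>As in the paper, f_bar t j and f_hat (Suc t) j are the predictions of y (Suc t).\<close>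
definition f_bar :: "nat \<Rightarrow> nat \<Rightarrow> 'a" where
  "f_bar t j = fbar_of f (state t) t j"

abbreviation f_hat :: "nat \<Rightarrow> nat \<Rightarrow> 'a" where
  "f_hat \<equiv> fhat l f y Om eta_a eta_w"

lemma d2eal_init [simp]:
  "alpha_hat 0 j = 1" "alpha_hat' 0 j = 1" "w_hat 0 j = 1" "f_hat 0 j = f 1 j"
  by (simp_all add: alpha_hat_def alpha_hat'_def w_hat_def fhat_def)

lemma alpha_hat_Suc: "alpha_hat (Suc t) j = alpha_hat t j * exp (- eta_a * l (f (Suc t) j) (y (Suc t)))"
  by (simp add: alpha_hat_def Let_def)

lemma alpha_hat'_Suc: "alpha_hat' (Suc t) j = alpha_hat' t j * exp (- eta_a * l (f_hat t j) (y (Suc t)))"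
  by (simp add: alpha_hat'_def fhat_def Let_def)

lemma w_hat_Suc: "w_hat (Suc t) j = w_hat t j * exp (- eta_w * l (f_bar t j) (y (Suc t)))"
  by (simp add: w_hat_def f_bar_def Let_def)

lemma f_hat_Suc:
  "f_hat (Suc t) j = (\<Sum>k\<in>Lam Om j t. (w_hat t k / (\<Sum>k'\<in>Lam Om j t. w_hat t k')) *\<^sub>R f_bar t k)"
  by (simp add: fhat_def w_hat_def f_bar_def Let_def fhat_of_def wgt_of_def cong: sum.cong)

lemma f_bar_eq:
  "f_bar t j = (alpha_hat t j / (alpha_hat t j + alpha_hat' t j)) *\<^sub>R f (Suc t) j
    + (1 - alpha_hat t j / (alpha_hat t j + alpha_hat' t j)) *\<^sub>R f_hat t j"
  by (simp add: f_bar_def fbar_of_def alpha_of_def alpha_hat_def alpha_hat'_def fhat_def)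

lemma d2eal_weights_pos: "alpha_hat t j > 0" "alpha_hat' t j > 0" "w_hat t j > 0"
  by (induction t) (simp_all add: alpha_hat_Suc alpha_hat'_Suc w_hat_Suc)

end

locale d2eal_bounded = d2eal l f y Om eta_a eta_w
  for l :: "'a::real_vector \<Rightarrow> 'y \<Rightarrow> real" and f y Om eta_a eta_w +
  fixes N T :: nat and A :: "'a set" and Y :: "'y set"
  assumes eta_a_pos: "eta_a > 0" and eta_w_pos: "eta_w > 0"
    and convex_A: "convex A"
    and loss_range: "\<And>x v. x \<in> A \<Longrightarrow> v \<in> Y \<Longrightarrow> 0 \<le> l x v \<and> l x v \<le> 1"
    and loss_convex: "\<And>v. v \<in> Y \<Longrightarrow> convex_on A (\<lambda>x. l x v)"
    and outcomes_in_Y: "\<And>t. 1 \<le> t \<Longrightarrow> t \<le> T \<Longrightarrow> y t \<in> Y"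
    and experts_in_A: "\<And>t j. 1 \<le> t \<Longrightarrow> t \<le> T \<Longrightarrow> j < N \<Longrightarrow> f t j \<in> A"
    and neighbours_le_N: "\<And>j t. j < N \<Longrightarrow> t \<le> T \<Longrightarrow> Om j t \<subseteq> {..<N}"
begin

lemma Lam_le_N: "j < N \<Longrightarrow> t \<le> T \<Longrightarrow> Lam Om j t \<subseteq> {..<N}"
  using neighbours_le_N by (auto simp: Lam_def)

lemma finite_Lam: "j < N \<Longrightarrow> t \<le> T \<Longrightarrow> finite (Lam Om j t)"
  using Lam_le_N finite_nat_iff_bounded by blast

text \<open>The two experts of the individual layer are indexed by bool: True is the agent's own
  expert, False its previous social prediction.\<close>
lemma f_bar_eq_mean:
  "f_bar t j = (\<Sum>b\<in>UNIV. ((if b then alpha_hat t j else alpha_hat' t j)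
     / (\<Sum>c\<in>UNIV. if c then alpha_hat t j else alpha_hat' t j)) *\<^sub>R (if b then f (Suc t) j else f_hat t j))"
proof -
  have "1 - alpha_hat t j / (alpha_hat t j + alpha_hat' t j) = alpha_hat' t j / (alpha_hat t j + alpha_hat' t j)"
    using d2eal_weights_pos[of t j] by (simp add: field_simps)
  then show ?thesis
    by (simp add: f_bar_eq UNIV_bool add.commute)
qed

lemma predictions_in_A:
  assumes "t < T" "j < N"
  shows "f_hat t j \<in> A \<and> f_bar t j \<in> A"
  using assms
proof (induction t arbitrary: j)
  case 0
  then show ?case
    unfolding f_bar_eq_mean using experts_in_A d2eal_weights_pos
    by (auto intro!: weighted_mean_in_convex[OF convex_A])
next
  case (Suc t)
  have "f_bar t k \<in> A" if "k \<in> Lam Om j t" for k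
    using Suc Lam_le_N[of j t] that by auto
  then have "f_hat (Suc t) j \<in> A"
    unfolding f_hat_Suc using Suc finite_Lam[of j t] d2eal_weights_pos
    by (intro weighted_mean_in_convex[OF convex_A]) (auto simp: Lam_def)
  then show ?case
    unfolding f_bar_eq_mean using Suc.prems experts_in_A d2eal_weights_pos
    by (auto intro!: weighted_mean_in_convex[OF convex_A])
qed

lemma social_regret:
  assumes i: "i < N" and shrinking: "\<And>t. t < T \<Longrightarrow> Om i (Suc t) \<subseteq> Om i t"
  shows "cumLhat l f y Om eta_a eta_w T i
    \<le> eta_w * T / 8 + ln (card (Lam Om i 0)) / eta_w + (\<Sum>t<T. l (f_bar t i) (y (Suc t)))"
proof -
  have "(\<Sum>t<T. l (f_hat (Suc t) i) (y (Suc t)))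
    \<le> eta_w * T / 8 + ln (card (Lam Om i 0)) / eta_w + (\<Sum>t<T. l (f_bar t i) (y (Suc t)))"
  proof (rule exp_weights_regret[OF eta_w_pos, where w = w_hat])
    fix t assume t: "t < T"
    have in_A: "f_bar t k \<in> A" if "k \<in> Lam Om i t" for k
      using predictions_in_A Lam_le_N[of i t] i t that by auto
    then show "\<And>k. k \<in> Lam Om i t \<Longrightarrow> 0 \<le> l (f_bar t k) (y (Suc t)) \<and> l (f_bar t k) (y (Suc t)) \<le> 1"
      using loss_range outcomes_in_Y t by simp
    show "l (f_hat (Suc t) i) (y (Suc t))
      \<le> (\<Sum>k\<in>Lam Om i t. w_hat t k * l (f_bar t k) (y (Suc t))) / (\<Sum>k\<in>Lam Om i t. w_hat t k)"
      unfolding f_hat_Suc using finite_Lam[of i t] i t in_A outcomes_in_Y d2eal_weights_pos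
      by (intro convex_on_weighted_mean[OF loss_convex]) (auto simp: Lam_def)
  qed (use i shrinking finite_Lam w_hat_Suc in \<open>auto simp: Lam_def\<close>)
  then show ?thesis
    unfolding cumLhat_def sum_bounds_lt_plus1[symmetric] .
qed

lemma individual_regret:
  assumes i: "i < N"
  shows "(\<Sum>t<T. l (f_bar t i) (y (Suc t))) \<le> eta_a * T / 8 + ln 2 / eta_a + cumL l f y T i"
proof -
  define w where "w t b = (if b then alpha_hat t i else alpha_hat' t i)" for t b
  define x where "x t b = l (if b then f (Suc t) i else f_hat t i) (y (Suc t))" for t b
  have "(\<Sum>t<T. l (f_bar t i) (y (Suc t))) \<le> eta_a * T / 8 + ln (card (UNIV :: bool set)) / eta_a
    + (\<Sum>t<T. x t True)"
  proof (rule exp_weights_regret[OF eta_a_pos, where w = w])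
    fix t assume t: "t < T"
    have in_A: "(if b then f (Suc t) i else f_hat t i) \<in> A" for b
      using predictions_in_A experts_in_A i t by auto
    then show "\<And>b. b \<in> UNIV \<Longrightarrow> 0 \<le> x t b \<and> x t b \<le> 1"
      using loss_range outcomes_in_Y t by (simp add: x_def)
    show "l (f_bar t i) (y (Suc t)) \<le> (\<Sum>b\<in>UNIV. w t b * x t b) / (\<Sum>b\<in>UNIV. w t b)"
      unfolding f_bar_eq_mean x_def w_def using in_A outcomes_in_Y t d2eal_weights_pos
      by (intro convex_on_weighted_mean[OF loss_convex]) auto
  qed (auto simp: w_def x_def alpha_hat_Suc alpha_hat'_Suc)
  then show ?thesis
    unfolding cumL_def sum_bounds_lt_plus1[symmetric] by (simp add: x_def)
qed

end

theorem corollary3: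
  fixes N T i istar :: nat
    and A Y :: "'a::euclidean_space set"
    and l :: "'a \<Rightarrow> 'a \<Rightarrow> real"
    and f :: "nat \<Rightarrow> nat \<Rightarrow> 'a"
    and y :: "nat \<Rightarrow> 'a"
    and Om :: "nat \<Rightarrow> nat \<Rightarrow> nat set"
    and eta_a eta_w L1 Delta_o :: real
    and delta :: "nat \<Rightarrow> real"
  assumes N: "N \<ge> 1" and T: "T \<ge> 1" and i: "i < N"
    and eta_a: "eta_a > 0" and eta_w: "eta_w > 0"
    and convA: "convex A" and convY: "convex Y"
    and l_range: "\<And>x v. x \<in> A \<Longrightarrow> v \<in> Y \<Longrightarrow> 0 \<le> l x v \<and> l x v \<le> 1"
    and l_convex: "\<And>v. v \<in> Y \<Longrightarrow> convex_on A (\<lambda>x. l x v)"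
    and y_in: "\<And>t. 1 \<le> t \<Longrightarrow> t \<le> T \<Longrightarrow> y t \<in> Y"
    and f_in: "\<And>t j. 1 \<le> t \<Longrightarrow> t \<le> T \<Longrightarrow> j < N \<Longrightarrow> f t j \<in> A"
    and graph_dom: "\<And>j t. j < N \<Longrightarrow> t \<le> T \<Longrightarrow> Om j t \<subseteq> {..<N} - {j}"
    and graph_sym: "\<And>j k t. j < N \<Longrightarrow> k < N \<Longrightarrow> t \<le> T \<Longrightarrow> (k \<in> Om j t \<longleftrightarrow> j \<in> Om k t)"
    and asm1: "\<And>t. 1 \<le> t \<Longrightarrow> t \<le> T \<Longrightarrow> Om i t \<subseteq> Om i (t - 1)"
    and L1: "L1 \<ge> 0"
    and asm2: "\<And>x1 x2 v. x1 \<in> A \<Longrightarrow> x2 \<in> A \<Longrightarrow> v \<in> Y \<Longrightarrow> \<bar>l x1 v - l x2 v\<bar> \<le> L1 * norm (x1 - x2)"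
    and delta_nn: "\<And>t. 1 \<le> t \<Longrightarrow> t \<le> T \<Longrightarrow> delta t \<ge> 0"
    and asm3: "\<And>t k j. 1 \<le> t \<Longrightarrow> t \<le> T \<Longrightarrow> k < N \<Longrightarrow> j < N \<Longrightarrow> norm (f t k - f t j) \<le> delta t"
    and Delta_o: "Delta_o \<ge> (\<Sum>t=1..T. delta t)"
    and istar: "istar < N" "\<And>j. j < N \<Longrightarrow> cumL l f y T istar \<le> cumL l f y T j"
  shows "cumLhat l f y Om eta_a eta_w T i - cumL l f y T istar
    \<le> eta_w * T / 8 + ln (card (Lam Om i 0)) / eta_w + eta_a * T / 8 + ln 2 / eta_a + L1 * Delta_o"
proof -
  interpret d2eal_bounded l f y Om eta_a eta_w N T A Y
    using eta_a eta_w convA l_range l_convex y_in f_in graph_dom by unfold_locales blast+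
  have shrinking: "Om i (Suc t) \<subseteq> Om i t" if "t < T" for t
    using asm1[of "Suc t"] that by simp
  have "cumL l f y T i - cumL l f y T istar \<le> L1 * (\<Sum>t=1..T. delta t)"
    by (rule cumL_diff_le_Lipschitz[OF asm2 L1 y_in]) (use f_in asm3 i istar(1) in auto)
  also have "\<dots> \<le> L1 * Delta_o"
    using Delta_o L1 by (rule mult_left_mono)
  finally show ?thesis
    using social_regret[OF i shrinking] individual_regret[OF i] by linarith
qed

end
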